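(* Let $E=(A\subset B)\in\mathcal S$ and $\ell\ge0$, and let $\pi:E\to E|^\ell=(A/p^\ell A\subset B/p^\ell A)$ be the morphism given by the canonical projection $B\to B/p^\ell A$. Then $\pi$ is a minimal left approximation of $E$ in $\mathcal S_\ell$: every morphism $E\to F$ with $F\in\mathcal S_\ell$ factors through $\pi$, and every endomorphism $u$ of $E|^\ell$ with $u\pi=\pi$ is an automorphism.
   Context: Let $R$ be a commutative principal ideal domain, $p$ a generator of a maximal ideal. A $p$-module is a finite-length $R$-module annihilated by some power of $p$. $\mathcal S$ is the category of embeddings $(A\subset B)$ of a submodule in a $p$-module, morphisms $(A\subset B)\to(A'\subset B')$ being $R$-maps $f:B\to B'$ with $f(A)\subseteq A'$. $\mathcal S_\ell$ is the full subcategory of objects with $p^\ell A=0$. *)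

theory Defs
  imports "HOL-Algebra.Algebra"
begin

definition rlinear :: "'r ring \<Rightarrow> ('r,'a) module \<Rightarrow> ('r,'b) module \<Rightarrow> ('a \<Rightarrow> 'b) \<Rightarrow> bool" where
  "rlinear R M N f \<longleftrightarrow>
     f \<in> carrier M \<rightarrow> carrier N \<and>
     (\<forall>x\<in>carrier M. \<forall>y\<in>carrier M. f (x \<oplus>\<^bsub>M\<^esub> y) = f x \<oplus>\<^bsub>N\<^esub> f y) \<and>
     (\<forall>r\<in>carrier R. \<forall>x\<in>carrier M. f (r \<odot>\<^bsub>M\<^esub> x) = r \<odot>\<^bsub>N\<^esub> f x)"

definition finite_length :: "'r ring \<Rightarrow> ('r,'a) module \<Rightarrow> bool" where
  "finite_length R M \<longleftrightarrow>
     (\<exists>n::nat. \<forall>(c :: nat \<Rightarrow> 'a set) k.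
        (\<forall>i\<le>k. submodule (c i) R M) \<and> (\<forall>i<k. c i \<subset> c (Suc i)) \<longrightarrow> k \<le> n)"

definition p_module :: "'r ring \<Rightarrow> 'r \<Rightarrow> ('r,'a) module \<Rightarrow> bool" where
  "p_module R p M \<longleftrightarrow> module R M \<and> finite_length R M \<and>
     (\<exists>n::nat. \<forall>x\<in>carrier M. (p [^]\<^bsub>R\<^esub> n) \<odot>\<^bsub>M\<^esub> x = \<zero>\<^bsub>M\<^esub>)"

definition S_obj :: "'r ring \<Rightarrow> 'r \<Rightarrow> 'a set \<times> ('r,'a) module \<Rightarrow> bool" where
  "S_obj R p E \<longleftrightarrow> p_module R p (snd E) \<and> submodule (fst E) R (snd E)"

definition S_ell_obj :: "'r ring \<Rightarrow> 'r \<Rightarrow> nat \<Rightarrow> 'a set \<times> ('r,'a) module \<Rightarrow> bool" where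
  "S_ell_obj R p l E \<longleftrightarrow> S_obj R p E \<and>
     (\<forall>a\<in>fst E. (p [^]\<^bsub>R\<^esub> l) \<odot>\<^bsub>snd E\<^esub> a = \<zero>\<^bsub>snd E\<^esub>)"

definition S_mor :: "'r ring \<Rightarrow> 'a set \<times> ('r,'a) module \<Rightarrow> 'b set \<times> ('r,'b) module \<Rightarrow> ('a \<Rightarrow> 'b) \<Rightarrow> bool" where
  "S_mor R E F f \<longleftrightarrow> rlinear R (snd E) (snd F) f \<and> f ` fst E \<subseteq> fst F"

definition S_iso :: "'r ring \<Rightarrow> 'a set \<times> ('r,'a) module \<Rightarrow> 'b set \<times> ('r,'b) module \<Rightarrow> ('a \<Rightarrow> 'b) \<Rightarrow> bool" where
  "S_iso R E F f \<longleftrightarrow> S_mor R E F f \<and>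
     (\<exists>g. S_mor R F E g \<and> (\<forall>x\<in>carrier (snd E). g (f x) = x) \<and> (\<forall>y\<in>carrier (snd F). f (g y) = y))"

definition mcoset :: "('r,'a) module \<Rightarrow> 'a set \<Rightarrow> 'a \<Rightarrow> 'a set" where
  "mcoset M N x = {x \<oplus>\<^bsub>M\<^esub> n | n. n \<in> N}"

definition quot_module :: "('r,'a) module \<Rightarrow> 'a set \<Rightarrow> ('r, 'a set) module" where
  "quot_module M N =
     \<lparr> partial_object.carrier = mcoset M N ` carrier M,
       monoid.mult = (\<lambda>U V. U), monoid.one = N,
       ring.zero = N,
       ring.add = (\<lambda>U V. {x \<oplus>\<^bsub>M\<^esub> y | x y. x \<in> U \<and> y \<in> V}),
       module.smult = (\<lambda>r U. {r \<odot>\<^bsub>M\<^esub> x \<oplus>\<^bsub>M\<^esub> n | x n. x \<in> U \<and> n \<in> N}) \<rparr>"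

definition pow_smult :: "'r ring \<Rightarrow> 'r \<Rightarrow> nat \<Rightarrow> ('r,'a) module \<Rightarrow> 'a set \<Rightarrow> 'a set" where
  "pow_smult R p l M A = {(p [^]\<^bsub>R\<^esub> l) \<odot>\<^bsub>M\<^esub> a | a. a \<in> A}"

definition trunc_proj :: "'r ring \<Rightarrow> 'r \<Rightarrow> nat \<Rightarrow> 'a set \<times> ('r,'a) module \<Rightarrow> 'a \<Rightarrow> 'a set" where
  "trunc_proj R p l E = mcoset (snd E) (pow_smult R p l (snd E) (fst E))"

definition trunc :: "'r ring \<Rightarrow> 'r \<Rightarrow> nat \<Rightarrow> 'a set \<times> ('r,'a) module \<Rightarrow> 'a set set \<times> ('r,'a set) module" where
  "trunc R p l E = (trunc_proj R p l E ` fst E,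
                    quot_module (snd E) (pow_smult R p l (snd E) (fst E)))"

end

theory Submission
  imports Defs
begin

text \<open>
  Since p^l A is a submodule of B, the quotient B/p^l A is again a module of finite length
  (a strict chain of submodules of the quotient pulls back, by taking unions of cosets, to a
  strict chain in B), killed by the same power of p as B, and A/p^l A is killed by p^l.
  A morphism g into an object of \<open>\<S>\<^sub>l\<close> vanishes on p^l A, because
  g(p^l a) = p^l g(a) = 0, so it factors through the projection \<pi>.
  Minimality is automatic: \<pi> is surjective, so u \<pi> = \<pi> forces u = id.
\<close>

lemma submodule_zero_closed: "submodule A R M \<Longrightarrow> \<zero>\<^bsub>M\<^esub> \<in> A"
  using subgroup.one_closed[OF submodule.axioms(1)] by fastforce

lemma (in module) submodule_smult_image:
  assumes A: "submodule A R M" and c: "c \<in> carrier R"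
  shows "submodule {c \<odot>\<^bsub>M\<^esub> a | a. a \<in> A} R M"
proof -
  note AE = submoduleE[OF A]
  show ?thesis
  proof (intro submoduleI)
    fix x assume "x \<in> {c \<odot>\<^bsub>M\<^esub> a | a. a \<in> A}"
    then obtain a where a: "a \<in> A" "x = c \<odot>\<^bsub>M\<^esub> a" by auto
    have "\<ominus>\<^bsub>M\<^esub> x = c \<odot>\<^bsub>M\<^esub> (\<ominus>\<^bsub>M\<^esub> a)" using a c AE(1) smult_r_minus by auto
    then show "\<ominus>\<^bsub>M\<^esub> x \<in> {c \<odot>\<^bsub>M\<^esub> a | a. a \<in> A}" using AE(3) a by auto
  next
    fix x y assume "x \<in> {c \<odot>\<^bsub>M\<^esub> a | a. a \<in> A}" "y \<in> {c \<odot>\<^bsub>M\<^esub> a | a. a \<in> A}"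
    then obtain a b where ab: "a \<in> A" "x = c \<odot>\<^bsub>M\<^esub> a" "b \<in> A" "y = c \<odot>\<^bsub>M\<^esub> b" by auto
    have "x \<oplus>\<^bsub>M\<^esub> y = c \<odot>\<^bsub>M\<^esub> (a \<oplus>\<^bsub>M\<^esub> b)"
      using ab c subsetD[OF AE(1)] by (simp add: smult_r_distr)
    then show "x \<oplus>\<^bsub>M\<^esub> y \<in> {c \<odot>\<^bsub>M\<^esub> a | a. a \<in> A}" using AE(5) ab by auto
  next
    fix r x assume r: "r \<in> carrier R" and "x \<in> {c \<odot>\<^bsub>M\<^esub> a | a. a \<in> A}"
    then obtain a where a: "a \<in> A" "x = c \<odot>\<^bsub>M\<^esub> a" by auto
    have "r \<odot>\<^bsub>M\<^esub> x = c \<odot>\<^bsub>M\<^esub> (r \<odot>\<^bsub>M\<^esub> a)"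
      using a c r AE(1) m_comm by (auto simp: smult_assoc1[symmetric])
    then show "r \<odot>\<^bsub>M\<^esub> x \<in> {c \<odot>\<^bsub>M\<^esub> a | a. a \<in> A}" using AE(4) a r by auto
  qed (use AE(1) c submodule_zero_closed[OF A] in \<open>auto intro!: exI[of _ "\<zero>\<^bsub>M\<^esub>"]\<close>)
qed

locale module_quotient = module R M
  for R :: "'a ring" (structure) and M :: "('a,'c) module" (structure) +
  fixes N assumes N_submodule: "submodule N R M"
begin

abbreviation "proj \<equiv> mcoset M N"
abbreviation "Q \<equiv> quot_module M N"

lemma N_subset: "N \<subseteq> carrier M" and N_zero: "\<zero>\<^bsub>M\<^esub> \<in> N"
  and N_minus: "n \<in> N \<Longrightarrow> \<ominus>\<^bsub>M\<^esub> n \<in> N"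
  and N_add: "n \<in> N \<Longrightarrow> m \<in> N \<Longrightarrow> n \<oplus>\<^bsub>M\<^esub> m \<in> N"
  and N_smult: "a \<in> carrier R \<Longrightarrow> n \<in> N \<Longrightarrow> a \<odot>\<^bsub>M\<^esub> n \<in> N"
  using submoduleE[OF N_submodule] submodule_zero_closed[OF N_submodule] by auto

lemma mem_proj_iff: "y \<in> proj x \<longleftrightarrow> (\<exists>n\<in>N. y = x \<oplus>\<^bsub>M\<^esub> n)"
  by (auto simp: mcoset_def)

lemma proj_subset_carrier: "x \<in> carrier M \<Longrightarrow> proj x \<subseteq> carrier M"
  using N_subset by (auto simp: mem_proj_iff intro!: a_closed)

lemma proj_self: "x \<in> carrier M \<Longrightarrow> x \<in> proj x"
  using N_zero by (auto simp: mem_proj_iff intro!: bexI[of _ "\<zero>\<^bsub>M\<^esub>"])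

lemma proj_eq_proj:
  assumes x: "x \<in> carrier M" and y: "y \<in> proj x"
  shows "proj y = proj x"
proof -
  obtain m where m: "m \<in> N" "y = x \<oplus>\<^bsub>M\<^esub> m" using y by (auto simp: mem_proj_iff)
  have mc: "m \<in> carrier M" using m N_subset by auto
  show ?thesis
  proof (intro equalityI subsetI)
    fix z assume "z \<in> proj y"
    then obtain n where n: "n \<in> N" "z = y \<oplus>\<^bsub>M\<^esub> n" by (auto simp: mem_proj_iff)
    have "z = x \<oplus>\<^bsub>M\<^esub> (m \<oplus>\<^bsub>M\<^esub> n)" using n m x mc N_subset by (auto simp: a_assoc)
    then show "z \<in> proj x" using N_add n m by (auto simp: mem_proj_iff)
  next
    fix z assume "z \<in> proj x"
    then obtain n where n: "n \<in> N" "z = x \<oplus>\<^bsub>M\<^esub> n" by (auto simp: mem_proj_iff)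
    have "n \<in> carrier M" using n N_subset by auto
    then have "z = y \<oplus>\<^bsub>M\<^esub> ((\<ominus>\<^bsub>M\<^esub> m) \<oplus>\<^bsub>M\<^esub> n)"
      using n m x mc by (simp add: a_assoc a_assoc[symmetric, of m] r_neg)
    then show "z \<in> proj y" using N_add N_minus n m by (auto simp: mem_proj_iff)
  qed
qed

lemma proj_zero: "proj \<zero>\<^bsub>M\<^esub> = N"
  using N_subset by (force simp: mem_proj_iff)

lemma proj_eq_submodule: "n \<in> N \<Longrightarrow> proj n = N"
  using N_subset proj_eq_proj[of "\<zero>\<^bsub>M\<^esub>" n] proj_zero by (force simp: mem_proj_iff)

lemma quotient_carrier: "carrier Q = proj ` carrier M"
  by (simp add: quot_module_def)

lemma quotient_zero: "\<zero>\<^bsub>Q\<^esub> = proj \<zero>\<^bsub>M\<^esub>"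
  by (simp add: quot_module_def proj_zero)

lemma quotient_cases:
  assumes "U \<in> carrier Q"
  obtains x where "x \<in> carrier M" "U = proj x"
  using assms by (auto simp: quotient_carrier)

lemma quotient_add:
  assumes x: "x \<in> carrier M" and y: "y \<in> carrier M"
  shows "proj x \<oplus>\<^bsub>Q\<^esub> proj y = proj (x \<oplus>\<^bsub>M\<^esub> y)"
proof -
  have "{a \<oplus>\<^bsub>M\<^esub> b | a b. a \<in> proj x \<and> b \<in> proj y} = proj (x \<oplus>\<^bsub>M\<^esub> y)"
  proof (intro equalityI subsetI)
    fix z assume "z \<in> {a \<oplus>\<^bsub>M\<^esub> b | a b. a \<in> proj x \<and> b \<in> proj y}"
    then obtain n m where nm: "n \<in> N" "m \<in> N" "z = (x \<oplus>\<^bsub>M\<^esub> n) \<oplus>\<^bsub>M\<^esub> (y \<oplus>\<^bsub>M\<^esub> m)"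
      by (auto simp: mem_proj_iff)
    have "z = (x \<oplus>\<^bsub>M\<^esub> y) \<oplus>\<^bsub>M\<^esub> (n \<oplus>\<^bsub>M\<^esub> m)"
      using nm x y subsetD[OF N_subset nm(1)] subsetD[OF N_subset nm(2)] by (simp add: a_ac)
    then show "z \<in> proj (x \<oplus>\<^bsub>M\<^esub> y)" using nm N_add by (auto simp: mem_proj_iff)
  next
    fix z assume "z \<in> proj (x \<oplus>\<^bsub>M\<^esub> y)"
    then obtain n where n: "n \<in> N" "z = (x \<oplus>\<^bsub>M\<^esub> y) \<oplus>\<^bsub>M\<^esub> n" by (auto simp: mem_proj_iff)
    have "z = x \<oplus>\<^bsub>M\<^esub> (y \<oplus>\<^bsub>M\<^esub> n)" using n x y N_subset by (auto simp: a_ac)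
    moreover have "y \<oplus>\<^bsub>M\<^esub> n \<in> proj y" using n by (auto simp: mem_proj_iff)
    ultimately show "z \<in> {a \<oplus>\<^bsub>M\<^esub> b | a b. a \<in> proj x \<and> b \<in> proj y}"
      using proj_self[OF x] by blast
  qed
  then show ?thesis by (simp add: quot_module_def)
qed

lemma quotient_smult:
  assumes r: "r \<in> carrier R" and x: "x \<in> carrier M"
  shows "r \<odot>\<^bsub>Q\<^esub> proj x = proj (r \<odot>\<^bsub>M\<^esub> x)"
proof -
  have "{r \<odot>\<^bsub>M\<^esub> a \<oplus>\<^bsub>M\<^esub> n | a n. a \<in> proj x \<and> n \<in> N} = proj (r \<odot>\<^bsub>M\<^esub> x)"
  proof (intro equalityI subsetI)
    fix z assume "z \<in> {r \<odot>\<^bsub>M\<^esub> a \<oplus>\<^bsub>M\<^esub> n | a n. a \<in> proj x \<and> n \<in> N}"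
    then obtain n m where nm: "n \<in> N" "m \<in> N" "z = r \<odot>\<^bsub>M\<^esub> (x \<oplus>\<^bsub>M\<^esub> m) \<oplus>\<^bsub>M\<^esub> n"
      by (auto simp: mem_proj_iff)
    have "z = (r \<odot>\<^bsub>M\<^esub> x) \<oplus>\<^bsub>M\<^esub> (r \<odot>\<^bsub>M\<^esub> m \<oplus>\<^bsub>M\<^esub> n)"
      using nm x r subsetD[OF N_subset nm(1)] subsetD[OF N_subset nm(2)]
      by (simp add: a_ac smult_r_distr)
    then show "z \<in> proj (r \<odot>\<^bsub>M\<^esub> x)" using nm N_add N_smult r by (auto simp: mem_proj_iff)
  next
    fix z assume "z \<in> proj (r \<odot>\<^bsub>M\<^esub> x)"
    then show "z \<in> {r \<odot>\<^bsub>M\<^esub> a \<oplus>\<^bsub>M\<^esub> n | a n. a \<in> proj x \<and> n \<in> N}"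
      using proj_self[OF x] by (auto simp: mem_proj_iff)
  qed
  then show ?thesis by (simp add: quot_module_def)
qed

lemma quotient_module: "module R Q"
proof (rule moduleI)
  show "abelian_group Q"
  proof (rule abelian_groupI)
    fix U assume "U \<in> carrier Q"
    then obtain x where x: "x \<in> carrier M" "U = proj x" by (rule quotient_cases)
    then have "proj (\<ominus>\<^bsub>M\<^esub> x) \<oplus>\<^bsub>Q\<^esub> U = \<zero>\<^bsub>Q\<^esub>"
      by (simp add: quotient_add quotient_zero proj_zero l_neg)
    moreover have "proj (\<ominus>\<^bsub>M\<^esub> x) \<in> carrier Q" using x by (simp add: quotient_carrier)
    ultimately show "\<exists>V\<in>carrier Q. V \<oplus>\<^bsub>Q\<^esub> U = \<zero>\<^bsub>Q\<^esub>" by blast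
  qed (auto elim!: quotient_cases
        simp: quotient_add quotient_zero quotient_carrier a_ac)
qed (auto elim!: quotient_cases intro: is_cring
      simp: quotient_smult quotient_add quotient_carrier smult_l_distr smult_r_distr smult_assoc1)

sublocale Q: module R Q
  by (rule quotient_module)

lemma quotient_minus:
  assumes x: "x \<in> carrier M"
  shows "\<ominus>\<^bsub>Q\<^esub> proj x = proj (\<ominus>\<^bsub>M\<^esub> x)"
  by (rule Q.minus_equality)
    (use x in \<open>auto simp: quotient_add quotient_zero quotient_carrier l_neg\<close>)

lemma proj_rlinear: "rlinear R M Q proj"
  unfolding rlinear_def by (auto simp: quotient_carrier quotient_add quotient_smult)

lemma submodule_proj_image:
  assumes A: "submodule A R M"
  shows "submodule (proj ` A) R Q"
proof -
  note AE = submoduleE[OF A]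
  have "\<zero>\<^bsub>Q\<^esub> \<in> proj ` A" using submodule_zero_closed[OF A] by (auto simp: quotient_zero)
  then show ?thesis
  proof (intro Q.submoduleI)
    fix U V assume "U \<in> proj ` A" "V \<in> proj ` A"
    then obtain x y where xy: "x \<in> A" "y \<in> A" "U = proj x" "V = proj y" by blast
    then show "U \<oplus>\<^bsub>Q\<^esub> V \<in> proj ` A"
      using quotient_add[OF subsetD[OF AE(1) xy(1)] subsetD[OF AE(1) xy(2)]] AE(5)[OF xy(1,2)] xy(3,4)
      by auto
  qed (use AE(1,3,4) in \<open>auto simp: quotient_carrier quotient_minus quotient_smult\<close>)
qed

lemma Union_eq_proj_preimage:
  assumes "S \<subseteq> carrier Q"
  shows "\<Union>S = {x \<in> carrier M. proj x \<in> S}"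
proof (intro equalityI subsetI)
  fix x assume "x \<in> \<Union>S"
  then obtain U where U: "U \<in> S" "x \<in> U" by auto
  then obtain y where y: "y \<in> carrier M" "U = proj y" using assms by (auto elim!: quotient_cases)
  moreover have "x \<in> carrier M" using U y proj_subset_carrier by auto
  ultimately show "x \<in> {x \<in> carrier M. proj x \<in> S}"
    using U proj_eq_proj[of y x] by auto
qed (use proj_self in auto)

lemma submodule_Union:
  assumes S: "submodule S R Q"
  shows "submodule (\<Union>S) R M"
  unfolding Union_eq_proj_preimage[OF Q.submoduleE(1)[OF S]]
proof (rule submoduleI)
  show "\<zero>\<^bsub>M\<^esub> \<in> {x \<in> carrier M. proj x \<in> S}"
    using submodule_zero_closed[OF S] by (auto simp: quotient_zero proj_zero)
qed (use Q.submoduleE[OF S] in \<open>auto simp: quotient_minus [symmetric] quotient_add [symmetric]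
      quotient_smult [symmetric]\<close>)

lemma finite_length_quotient:
  assumes "finite_length R M"
  shows "finite_length R Q"
proof -
  obtain n where n: "\<And>(c :: nat \<Rightarrow> 'c set) k.
      (\<forall>i\<le>k. submodule (c i) R M) \<and> (\<forall>i<k. c i \<subset> c (Suc i)) \<Longrightarrow> k \<le> n"
    using assms unfolding finite_length_def by blast
  show ?thesis unfolding finite_length_def
  proof (intro exI allI impI)
    fix c :: "nat \<Rightarrow> 'c set set" and k
    assume chain: "(\<forall>i\<le>k. submodule (c i) R Q) \<and> (\<forall>i<k. c i \<subset> c (Suc i))"
    then have carr: "c i \<subseteq> carrier Q" if "i \<le> k" for i
      using that Q.submoduleE(1) by auto
    have "\<forall>i\<le>k. submodule (\<Union>(c i)) R M" using chain submodule_Union by auto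
    moreover have "\<forall>i<k. \<Union>(c i) \<subset> \<Union>(c (Suc i))"
    proof (intro allI impI)
      fix i assume i: "i < k"
      have "c i \<subset> c (Suc i)" using chain i by blast
      then obtain U where U: "U \<in> c (Suc i)" "U \<notin> c i" by blast
      moreover have "c i \<subseteq> carrier Q" "c (Suc i) \<subseteq> carrier Q" using carr i by auto
      ultimately show "\<Union>(c i) \<subset> \<Union>(c (Suc i))"
        unfolding Union_eq_proj_preimage[OF \<open>c i \<subseteq> carrier Q\<close>]
          Union_eq_proj_preimage[OF \<open>c (Suc i) \<subseteq> carrier Q\<close>]
        using \<open>c i \<subset> c (Suc i)\<close> by (auto elim!: quotient_cases)
    qed
    ultimately show "k \<le> n" by (rule n[OF conjI])
  qed
qed

lemma quotient_annihilated:
  assumes "a \<in> carrier R" "\<forall>x\<in>carrier M. a \<odot>\<^bsub>M\<^esub> x = \<zero>\<^bsub>M\<^esub>"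
  shows "\<forall>U\<in>carrier Q. a \<odot>\<^bsub>Q\<^esub> U = \<zero>\<^bsub>Q\<^esub>"
  using assms by (auto elim!: quotient_cases simp: quotient_smult quotient_zero proj_zero)

lemma rlinear_factor_through_proj:
  assumes M': "module R M'" and g: "rlinear R M M' g" and gN: "\<And>n. n \<in> N \<Longrightarrow> g n = \<zero>\<^bsub>M'\<^esub>"
  shows "\<exists>h. rlinear R Q M' h \<and> (\<forall>x\<in>carrier M. h (proj x) = g x)"
proof -
  interpret M': module R M' by (rule M')
  define h where "h U = g (SOME x. x \<in> U)" for U
  have h_proj: "h (proj x) = g x" if x: "x \<in> carrier M" for x
  proof -
    have "(SOME y. y \<in> proj x) \<in> proj x" using proj_self[OF x] by (rule someI)
    then obtain n where n: "n \<in> N" "(SOME y. y \<in> proj x) = x \<oplus>\<^bsub>M\<^esub> n"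
      by (auto simp: mem_proj_iff)
    have "h (proj x) = g x \<oplus>\<^bsub>M'\<^esub> g n"
      using g x n N_subset unfolding h_def rlinear_def by auto
    also have "\<dots> = g x" using g x gN[OF n(1)] by (auto simp: rlinear_def funcset_mem)
    finally show ?thesis .
  qed
  have "rlinear R Q M' h"
    using g by (auto elim!: quotient_cases simp: rlinear_def quotient_carrier quotient_add quotient_smult h_proj)
  then show ?thesis using h_proj by blast
qed

end

lemma module_quotient_trunc:
  assumes p: "p \<in> carrier R" and E: "S_obj R p E"
  shows "module_quotient R (snd E) (pow_smult R p l (snd E) (fst E))"
proof -
  have B: "module R (snd E)" and A: "submodule (fst E) R (snd E)"
    using E by (auto simp: S_obj_def p_module_def)
  have "p [^]\<^bsub>R\<^esub> l \<in> carrier R"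
    using p module.axioms(1)[OF B] by (simp add: cring.axioms(1) ring.is_monoid monoid.nat_pow_closed)
  then have "submodule (pow_smult R p l (snd E) (fst E)) R (snd E)"
    unfolding pow_smult_def by (rule module.submodule_smult_image[OF B A])
  then show ?thesis
    using B by (intro module_quotient.intro module_quotient_axioms.intro)
qed

context
  fixes R :: "'r ring" and p :: 'r and l :: nat and E :: "'a set \<times> ('r,'a) module"
  assumes p: "p \<in> carrier R" and E: "S_obj R p E"
begin

interpretation module_quotient R "snd E" "pow_smult R p l (snd E) (fst E)"
  using module_quotient_trunc[OF p E] .

lemma trunc_eq: "trunc R p l E = (proj ` fst E, Q)" and trunc_proj_eq: "trunc_proj R p l E = proj"
  by (simp_all add: trunc_def trunc_proj_def)

lemma S_ell_obj_trunc: "S_ell_obj R p l (trunc R p l E)"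
proof -
  have A: "submodule (fst E) R (snd E)" and pB: "p_module R p (snd E)"
    using E by (auto simp: S_obj_def)
  obtain n where "\<forall>x\<in>carrier (snd E). (p [^]\<^bsub>R\<^esub> (n::nat)) \<odot>\<^bsub>snd E\<^esub> x = \<zero>\<^bsub>snd E\<^esub>"
    using pB by (auto simp: p_module_def)
  then have "\<forall>U\<in>carrier Q. (p [^]\<^bsub>R\<^esub> n) \<odot>\<^bsub>Q\<^esub> U = \<zero>\<^bsub>Q\<^esub>"
    using p by (intro quotient_annihilated) auto
  moreover have "finite_length R Q"
    using pB finite_length_quotient by (simp add: p_module_def)
  moreover have "(p [^]\<^bsub>R\<^esub> l) \<odot>\<^bsub>Q\<^esub> proj a = \<zero>\<^bsub>Q\<^esub>" if a: "a \<in> fst E" for a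
  proof -
    have "(p [^]\<^bsub>R\<^esub> l) \<odot>\<^bsub>snd E\<^esub> a \<in> pow_smult R p l (snd E) (fst E)"
      using a by (auto simp: pow_smult_def)
    then show ?thesis
      using a p submoduleE(1)[OF A] by (auto simp: quotient_smult proj_eq_submodule quotient_zero proj_zero)
  qed
  ultimately show ?thesis
    unfolding trunc_eq S_ell_obj_def S_obj_def p_module_def
    using quotient_module submodule_proj_image[OF A] by auto
qed

lemma S_mor_trunc_proj: "S_mor R E (trunc R p l E) (trunc_proj R p l E)"
  using proj_rlinear by (simp add: S_mor_def trunc_eq trunc_proj_eq)

lemma S_mor_factor_through_trunc_proj:
  fixes F :: "'b set \<times> ('r,'b) module"
  assumes F: "S_ell_obj R p l F" and g: "S_mor R E F g"
  shows "\<exists>h. S_mor R (trunc R p l E) F h \<and> (\<forall>b\<in>carrier (snd E). h (trunc_proj R p l E b) = g b)"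
proof -
  have M': "module R (snd F)" using F by (auto simp: S_ell_obj_def S_obj_def p_module_def)
  interpret M': module R "snd F" by (rule M')
  have gl: "rlinear R (snd E) (snd F) g" and gA: "g ` fst E \<subseteq> fst F"
    using g by (auto simp: S_mor_def)
  have "g ((p [^]\<^bsub>R\<^esub> l) \<odot>\<^bsub>snd E\<^esub> a) = \<zero>\<^bsub>snd F\<^esub>" if a: "a \<in> fst E" for a
  proof -
    have "a \<in> carrier (snd E)" using a E submoduleE(1) by (auto simp: S_obj_def)
    then have "g ((p [^]\<^bsub>R\<^esub> l) \<odot>\<^bsub>snd E\<^esub> a) = (p [^]\<^bsub>R\<^esub> l) \<odot>\<^bsub>snd F\<^esub> g a"
      using gl p unfolding rlinear_def by auto
    then show ?thesis using F gA a by (auto simp: S_ell_obj_def)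
  qed
  then obtain h where h: "rlinear R Q (snd F) h" "\<forall>x\<in>carrier (snd E). h (proj x) = g x"
    using rlinear_factor_through_proj[OF M' gl] by (auto simp: pow_smult_def)
  have "h ` proj ` fst E \<subseteq> fst F" using h(2) gA E submoduleE(1) by (auto simp: S_obj_def)
  then show ?thesis using h by (auto simp: S_mor_def trunc_eq trunc_proj_eq)
qed

lemma S_iso_if_comp_trunc_proj_eq:
  assumes u: "S_mor R (trunc R p l E) (trunc R p l E) u"
    and u_proj: "\<forall>b\<in>carrier (snd E). u (trunc_proj R p l E b) = trunc_proj R p l E b"
  shows "S_iso R (trunc R p l E) (trunc R p l E) u"
proof -
  have "\<forall>U\<in>carrier Q. u U = U" using u_proj by (auto simp: quotient_carrier trunc_proj_eq)
  then show ?thesis using u unfolding S_iso_def by (auto simp: trunc_eq)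
qed

end

theorem lemma8:
  fixes R :: "'r ring" and p :: 'r and l :: nat
    and E :: "'a set \<times> ('r,'a) module"
  assumes "principal_domain R"
    and "p \<in> carrier R"
    and "maximalideal (PIdl\<^bsub>R\<^esub> p) R"
    and "S_obj R p E"
  shows "S_ell_obj R p l (trunc R p l E)
       \<and> S_mor R E (trunc R p l E) (trunc_proj R p l E)
       \<and> (\<forall>(F :: 'b set \<times> ('r,'b) module) g.
            S_ell_obj R p l F \<and> S_mor R E F g \<longrightarrow>
            (\<exists>h. S_mor R (trunc R p l E) F h \<and>
                 (\<forall>b\<in>carrier (snd E). h (trunc_proj R p l E b) = g b)))
       \<and> (\<forall>u. S_mor R (trunc R p l E) (trunc R p l E) u \<and>
               (\<forall>b\<in>carrier (snd E). u (trunc_proj R p l E b) = trunc_proj R p l E b) \<longrightarrow>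
               S_iso R (trunc R p l E) (trunc R p l E) u)"
  using S_ell_obj_trunc[OF assms(2,4)] S_mor_trunc_proj[OF assms(2,4)]
    S_mor_factor_through_trunc_proj[OF assms(2,4)] S_iso_if_comp_trunc_proj_eq[OF assms(2,4)]
  by blast

end
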